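(* Consider the setting in the context: the exact solution $(\phi,p)$ of the periodic crime chemotaxis system with the stated regularity, and numerical solutions $(\phi_h^m,p_h^m)$ produced by the SPIMEX scheme (so in particular $p_h^m\ge0$ pointwise). Let $\tilde C>0$ be such that $\|\nabla_hp^0\|_{L^\infty}\le\tilde C$, and let $$B=\max_{0\le m\le T/\tau}\{\|\phi_h(t_m)\|_{L^\infty}+\|p_h(t_m)\|_{L^\infty}+\|(\nabla p)_h(t_m)\|_{L^\infty}\}.$$ Let $m\ge0$ be an index with $\|\phi_h^m\|_{L^\infty}+\|p_h^m\|_{L^\infty}+\|\nabla_hp_h^m\|_{L^\infty}\le B+1$, and define $$T_1^m=\nabla_h\cdot\Big(\frac{\phi_h(t_m)}{p_h(t_m)+p^0}\nabla_h(p_h(t_m)+p^0)-\frac{\phi_h^m}{p_h^m+p^0}\nabla_h(p_h^m+p^0)\Big).$$ Then for every $f_h\in X$, $$|\langle T_1^m,f_h\rangle|\le C_{B,m_p,\tilde C}\big(\|e_\phi^m\|_{L^2}+\|e_p^m\|_{H^1}\big)\|\nabla_hf_h\|_{L^2},$$ where $e_\phi^m=\phi_h(t_m)-\phi_h^m$, $e_p^m=p_h(t_m)-p_h^m$, and $C_{B,m_p,\tilde C}$ is a constant depending only on $B$, $m_p$ and $\tilde C$.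
   Context: PDE: $D,\eta>0$, $T>0$; $p^0$ smooth $\Omega$-periodic with $0<m_p\le p^0\le M_p$; $(\phi,p)$, $\phi,p\ge0$, solves periodically on $\Omega\times[0,T]$: $\partial_t\phi=\frac D4\nabla\cdot(\nabla\phi-\frac{2\phi}{p+p^0}\nabla(p+p^0))-(p+p^0)\phi$, $\partial_tp=\eta D\Delta p+(p+p^0)\phi-p$, with $\phi\in C^3([0,T];C^4_{per}(\Omega))$, $p\in C^3([0,T];C^5_{per}(\Omega))$ ($C^m_{per}$: $C^m$ with periodic derivatives up to order $m$). Grid and operators: $\Omega$ a square of side $L$, $h=L/N$, $X$ the periodic grid functions; $u_h(t)$ is the grid restriction of $u(\cdot,t)$ (also for $p^0$); $(D_xu)_{i+1/2,j}=(u_{i+1,j}-u_{i,j})/h$, $D_y$ analogous; $(d_xf)_{i,j}=(f_{i+1/2,j}-f_{i-1/2,j})/h$, $d_y$ analogous; $\nabla_h=(D_x,D_y)$, $\nabla_h\cdot(f^x,f^y)=d_xf^x+d_yf^y$, $\Delta_h=\nabla_h\cdot\nabla_h$; $\nabla_h\cdot(w\nabla_hv)=d_x(\bar wD_xv)+d_y(\bar wD_yv)$ with $\bar w$ the face-centred average of $w$. $\langle u,v\rangle=h^2\sum_{i,j=1}^Nu_{i,j}v_{i,j}$, $\|u\|_{L^2}^2=\langle u,u\rangle$, $\|u\|_{H^1}^2=\|u\|_{L^2}^2+\|\nabla_hu\|_{L^2}^2$, $\|u\|_{L^\infty}=\max|u_{i,j}|$. SPIMEX scheme: $\tau>0$,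 $t_k=k\tau$, $\phi_h^0=\phi_h(0)$, $p_h^0=p_h(0)$; predictor for $k\ge1$: $\frac{\tilde\phi_h^{k+1}-\phi_h^k}{\tau}=\frac D8\Delta_h(\tilde\phi_h^{k+1}+\phi_h^k)-\frac{3D}4\nabla_h\cdot(\frac{\phi_h^k}{p_h^k+p^0}\nabla_h(p_h^k+p^0))+\frac D4\nabla_h\cdot(\frac{\phi_h^{k-1}}{p_h^{k-1}+p^0}\nabla_h(p_h^{k-1}+p^0))-\frac32(p_h^k+p^0)\phi_h^k+\frac12(p_h^{k-1}+p^0)\phi_h^{k-1}$, $\frac{\tilde p_h^{k+1}-p_h^k}{\tau}=\frac{\eta D}2\Delta_h(\tilde p_h^{k+1}+p_h^k)+\frac32[(p_h^k+p^0)\phi_h^k-p_h^k]-\frac12[(p_h^{k-1}+p^0)\phi_h^{k-1}-p_h^{k-1}]$; for $k=0$: $\frac{\tilde\phi_h^1-\phi_h^0}{\tau}=\frac D8\Delta_h(\tilde\phi_h^1+\phi_h^0)-\frac D2\nabla_h\cdot(\frac{\phi_h^0}{p_h^0+p^0}\nabla_h(p_h^0+p^0))-(p_h^0+p^0)\phi_h^0$, $\frac{\tilde p_h^1-p_h^0}{\tau}=\frac{\eta D}2\Delta_h(\tilde p_h^1+p_h^0)+(p_h^0+p^0)\phi_h^0-p_h^0$. Corrector: $(\phi_h^{k+1},p_h^{k+1})$ minimizes $\frac12(\|\phi-\tilde\phi_h^{k+1}\|_{L^2}^2+\|p-\tilde p_h^{k+1}\|_{H^1}^2)$ over $X\times X$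 subject to $\phi\ge0$, $p\ge0$ pointwise. *)

theory Defs
  imports "HOL-Analysis.Analysis"
begin

text \<open>Periodic grid functions are represented as maps int => int => real, periodic
  with period N in both indices; the value at index (i,j) corresponds to the grid point
  (i*h, j*h). Face-centred quantities at (i+1/2, j) resp. (i, j+1/2) are stored at index (i,j).\<close>

type_synonym gridfun = "int \<Rightarrow> int \<Rightarrow> real"

definition grid_periodic :: "nat \<Rightarrow> gridfun \<Rightarrow> bool" where
  "grid_periodic N u \<longleftrightarrow> (\<forall>i j. u (i + int N) j = u i j \<and> u i (j + int N) = u i j)"

definition fun_periodic :: "real \<Rightarrow> (real \<times> real \<Rightarrow> real) \<Rightarrow> bool" where
  "fun_periodic L U \<longleftrightarrow> (\<forall>x y. U (x + L, y) = U (x, y) \<and> U (x, y + L) = U (x, y))"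

definition restrict :: "real \<Rightarrow> (real \<times> real \<Rightarrow> real) \<Rightarrow> gridfun" where
  "restrict h U = (\<lambda>i j. U (real_of_int i * h, real_of_int j * h))"

definition Dx :: "real \<Rightarrow> gridfun \<Rightarrow> gridfun" where
  "Dx h u = (\<lambda>i j. (u (i + 1) j - u i j) / h)"

definition Dy :: "real \<Rightarrow> gridfun \<Rightarrow> gridfun" where
  "Dy h u = (\<lambda>i j. (u i (j + 1) - u i j) / h)"

definition dx :: "real \<Rightarrow> gridfun \<Rightarrow> gridfun" where
  "dx h f = (\<lambda>i j. (f i j - f (i - 1) j) / h)"

definition dy :: "real \<Rightarrow> gridfun \<Rightarrow> gridfun" where
  "dy h f = (\<lambda>i j. (f i j - f i (j - 1)) / h)"

definition avgx :: "gridfun \<Rightarrow> gridfun" where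
  "avgx w = (\<lambda>i j. (w i j + w (i + 1) j) / 2)"

definition avgy :: "gridfun \<Rightarrow> gridfun" where
  "avgy w = (\<lambda>i j. (w i j + w i (j + 1)) / 2)"

definition div_coef_grad :: "real \<Rightarrow> gridfun \<Rightarrow> gridfun \<Rightarrow> gridfun" where
  "div_coef_grad h w v =
     (\<lambda>i j. dx h (\<lambda>a b. avgx w a b * Dx h v a b) i j
          + dy h (\<lambda>a b. avgy w a b * Dy h v a b) i j)"

definition chemo_flux_div :: "real \<Rightarrow> gridfun \<Rightarrow> gridfun \<Rightarrow> gridfun \<Rightarrow> gridfun" where
  "chemo_flux_div h phi p p0 =
     div_coef_grad h (\<lambda>i j. phi i j / (p i j + p0 i j)) (\<lambda>i j. p i j + p0 i j)"

definition ip :: "real \<Rightarrow> nat \<Rightarrow> gridfun \<Rightarrow> gridfun \<Rightarrow> real" where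
  "ip h N u v = h\<^sup>2 * (\<Sum>i\<in>{1..int N}. \<Sum>j\<in>{1..int N}. u i j * v i j)"

definition normL2 :: "real \<Rightarrow> nat \<Rightarrow> gridfun \<Rightarrow> real" where
  "normL2 h N u = sqrt (ip h N u u)"

definition gradL2 :: "real \<Rightarrow> nat \<Rightarrow> gridfun \<Rightarrow> real" where
  "gradL2 h N u = sqrt (ip h N (Dx h u) (Dx h u) + ip h N (Dy h u) (Dy h u))"

definition normH1 :: "real \<Rightarrow> nat \<Rightarrow> gridfun \<Rightarrow> real" where
  "normH1 h N u = sqrt ((normL2 h N u)\<^sup>2 + (gradL2 h N u)\<^sup>2)"

definition normLinf :: "nat \<Rightarrow> gridfun \<Rightarrow> real" where
  "normLinf N u = Max {\<bar>u i j\<bar> | i j. i \<in> {1..int N} \<and> j \<in> {1..int N}}"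

definition gradLinf :: "real \<Rightarrow> nat \<Rightarrow> gridfun \<Rightarrow> real" where
  "gradLinf h N u = max (normLinf N (Dx h u)) (normLinf N (Dy h u))"

definition pdx :: "(real \<times> real \<Rightarrow> real) \<Rightarrow> real \<times> real \<Rightarrow> real" where
  "pdx U z = deriv (\<lambda>s. U (s, snd z)) (fst z)"

definition pdy :: "(real \<times> real \<Rightarrow> real) \<Rightarrow> real \<times> real \<Rightarrow> real" where
  "pdy U z = deriv (\<lambda>s. U (fst z, s)) (snd z)"

definition cgradLinf :: "real \<Rightarrow> nat \<Rightarrow> (real \<times> real \<Rightarrow> real) \<Rightarrow> real" where
  "cgradLinf h N U = max (normLinf N (restrict h (pdx U))) (normLinf N (restrict h (pdy U)))"

end

theory Submission
  imports Defs "HOL-Library.Periodic_Fun"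
begin

(* Summation by parts moves the discrete divergence onto f: <T, f> = -(<F_x, D_x f> + <F_y, D_y f>),
   where F_x, F_y are the differences, between exact and numerical solution, of the face fluxes
   avg(phi / (p + p0)) * D(p + p0). Since p + p0 >= m_p and phi, p, grad_h p, grad_h p0 are bounded in
   terms of B and Ct, the difference on a face is bounded by the errors of phi and p at its two end
   nodes plus the difference quotient of e_p across it. By periodicity a shifted grid function has the
   same discrete L2 norm, so these face bounds give ||F_x|| + ||F_y|| <= C (||e_phi|| + ||e_p||_H1),
   and Cauchy-Schwarz finishes. *)

section \<open>Periodic grid functions\<close>

definition grid_cell :: "nat \<Rightarrow> (int \<times> int) set" where
  "grid_cell N = {1..int N} \<times> {1..int N}"

lemma finite_grid_cell [simp]: "finite (grid_cell N)"
  unfolding grid_cell_def by simp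

lemma sum_grid_cell: "(\<Sum>i\<in>{1..int N}. \<Sum>j\<in>{1..int N}. F i j) = (\<Sum>(i, j)\<in>grid_cell N. F i j)"
  unfolding grid_cell_def by (simp add: sum.cartesian_product)

lemma grid_periodic_shift:
  "grid_periodic N u \<Longrightarrow> grid_periodic N (\<lambda>i j. u (i + a) (j + b))"
  unfolding grid_periodic_def by (metis add.commute add.left_commute)

lemma grid_periodic_pointwise:
  "grid_periodic N u \<Longrightarrow> grid_periodic N v \<Longrightarrow> grid_periodic N (\<lambda>i j. F (u i j) (v i j))"
  unfolding grid_periodic_def by simp

lemma grid_periodic_transpose:
  "grid_periodic N u \<Longrightarrow> grid_periodic N (\<lambda>i j. u j i)"
  unfolding grid_periodic_def by blast

lemma grid_periodic_Dx: "grid_periodic N u \<Longrightarrow> grid_periodic N (Dx h u)"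
  unfolding Dx_def
  using grid_periodic_pointwise[OF grid_periodic_shift[of N u 1 0]] by simp

lemma grid_periodic_Dy: "grid_periodic N u \<Longrightarrow> grid_periodic N (Dy h u)"
  unfolding Dy_def
  using grid_periodic_pointwise[OF grid_periodic_shift[of N u 0 1]] by simp

lemma grid_periodic_avgx: "grid_periodic N u \<Longrightarrow> grid_periodic N (avgx u)"
  unfolding avgx_def
  using grid_periodic_pointwise[OF _ grid_periodic_shift[of N u 1 0]] by simp

lemma grid_periodic_avgy: "grid_periodic N u \<Longrightarrow> grid_periodic N (avgy u)"
  unfolding avgy_def
  using grid_periodic_pointwise[OF _ grid_periodic_shift[of N u 0 1]] by simp

lemma grid_periodic_wrap:
  assumes "grid_periodic N u"
  shows "u (int N) j = u 0 j" "u (int N + 1) j = u 1 j" "u i (int N) = u i 0" "u i (int N + 1) = u i 1"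
proof -
  have "u (0 + int N) j = u 0 j" "u (1 + int N) j = u 1 j" "u i (0 + int N) = u i 0" "u i (1 + int N) = u i 1"
    using assms unfolding grid_periodic_def by blast+
  then show "u (int N) j = u 0 j" "u (int N + 1) j = u 1 j" "u i (int N) = u i 0" "u i (int N + 1) = u i 1"
    by (simp_all add: add.commute)
qed

lemma grid_periodic_restrict:
  assumes "fun_periodic L U" "0 < N"
  shows "grid_periodic N (restrict (L / real N) U)"
proof -
  have "real_of_int (k + int N) * (L / real N) = real_of_int k * (L / real N) + L" for k
    using assms(2) by (simp add: algebra_simps)
  then show ?thesis
    using assms(1) unfolding grid_periodic_def fun_periodic_def restrict_def by simp
qed

lemma grid_periodic_eq_cell_value:
  assumes "grid_periodic N u" "0 < N"
  obtains r s where "(r, s) \<in> grid_cell N" "u i j = u r s"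
proof
  have pos: "0 < int N" using assms(2) by simp
  define r where "r = (i - 1) mod int N + 1"
  define s where "s = (j - 1) mod int N + 1"
  show "(r, s) \<in> grid_cell N"
    unfolding grid_cell_def r_def s_def
    using pos_mod_bound[OF pos] pos_mod_sign[OF pos] by (simp add: add1_zle_eq)
  interpret row: periodic_fun_simple "\<lambda>a. u a s" "int N"
    using assms(1) by unfold_locales (simp add: grid_periodic_def)
  interpret col: periodic_fun_simple "\<lambda>b. u i b" "int N"
    using assms(1) by unfold_locales (simp add: grid_periodic_def)
  have "i = r + of_int ((i - 1) div int N) * int N" "j = s + of_int ((j - 1) div int N) * int N"
    unfolding r_def s_def by (simp_all add: mod_div_mult_eq[symmetric, of "_ - 1"] algebra_simps)
  then show "u i j = u r s"
    using row.plus_of_int col.plus_of_int by metis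
qed

lemma Dx_add: "Dx h (\<lambda>i j. u i j + v i j) i j = Dx h u i j + Dx h v i j"
  unfolding Dx_def by (simp add: add_divide_distrib[symmetric])

lemma Dy_add: "Dy h (\<lambda>i j. u i j + v i j) i j = Dy h u i j + Dy h v i j"
  unfolding Dy_def by (simp add: add_divide_distrib[symmetric])

section \<open>Discrete norms\<close>

lemma normLinf_eq_Max: "normLinf N u = Max ((\<lambda>(i, j). \<bar>u i j\<bar>) ` grid_cell N)"
proof -
  have "{\<bar>u i j\<bar> | i j. i \<in> {1..int N} \<and> j \<in> {1..int N}} = (\<lambda>(i, j). \<bar>u i j\<bar>) ` grid_cell N"
    unfolding grid_cell_def by force
  then show ?thesis unfolding normLinf_def by simp
qed

lemma abs_le_normLinf:
  assumes "grid_periodic N u" "0 < N"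
  shows "\<bar>u i j\<bar> \<le> normLinf N u"
proof -
  obtain r s where "(r, s) \<in> grid_cell N" "u i j = u r s"
    using grid_periodic_eq_cell_value[OF assms] .
  then show ?thesis unfolding normLinf_eq_Max by (auto intro: Max_ge)
qed

lemma normLinf_nonneg:
  assumes "0 < N"
  shows "0 \<le> normLinf N u"
proof -
  have "(1, 1) \<in> grid_cell N" unfolding grid_cell_def using assms by simp
  then have "\<bar>u 1 1\<bar> \<le> normLinf N u" unfolding normLinf_eq_Max by (auto intro!: Max_ge)
  then show ?thesis by linarith
qed

lemma gradLinf_nonneg: "0 < N \<Longrightarrow> 0 \<le> gradLinf h N u"
  unfolding gradLinf_def using normLinf_nonneg by (simp add: le_max_iff_disj)

lemma cgradLinf_nonneg: "0 < N \<Longrightarrow> 0 \<le> cgradLinf h N U"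
  unfolding cgradLinf_def using normLinf_nonneg by (simp add: le_max_iff_disj)

lemma abs_Dx_le_gradLinf:
  "grid_periodic N u \<Longrightarrow> 0 < N \<Longrightarrow> \<bar>Dx h u i j\<bar> \<le> gradLinf h N u"
  unfolding gradLinf_def by (metis abs_le_normLinf grid_periodic_Dx max.coboundedI1)

lemma abs_Dy_le_gradLinf:
  "grid_periodic N u \<Longrightarrow> 0 < N \<Longrightarrow> \<bar>Dy h u i j\<bar> \<le> gradLinf h N u"
  unfolding gradLinf_def by (metis abs_le_normLinf grid_periodic_Dy max.coboundedI2)

lemma ip_eq_sum_grid_cell: "ip h N u v = h\<^sup>2 * (\<Sum>(i, j)\<in>grid_cell N. u i j * v i j)"
  unfolding ip_def sum_grid_cell ..

lemma ip_add_left: "ip h N (\<lambda>i j. u i j + v i j) f = ip h N u f + ip h N v f"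
  unfolding ip_def by (simp add: distrib_right sum.distrib distrib_left)

lemma ip_diff_left: "ip h N (\<lambda>i j. u i j - v i j) f = ip h N u f - ip h N v f"
  unfolding ip_def by (simp add: left_diff_distrib sum_subtractf right_diff_distrib)

lemma ip_transpose: "ip h N (\<lambda>i j. u j i) (\<lambda>i j. v j i) = ip h N u v"
  unfolding ip_def by (subst sum.swap) (rule refl)

lemma ip_self_nonneg: "0 \<le> ip h N u u"
  unfolding ip_def by (simp add: sum_nonneg)

lemma normL2_eq_L2_set: "normL2 h N u = \<bar>h\<bar> * L2_set (case_prod u) (grid_cell N)"
  unfolding normL2_def ip_eq_sum_grid_cell L2_set_def
  by (simp add: real_sqrt_mult split_def power2_eq_square)

lemma normL2_nonneg: "0 \<le> normL2 h N u"
  unfolding normL2_eq_L2_set by simp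

lemma ip_self_eq_normL2_sq: "ip h N u u = (normL2 h N u)\<^sup>2"
  unfolding normL2_def using ip_self_nonneg by simp

lemma abs_ip_le: "\<bar>ip h N u v\<bar> \<le> normL2 h N u * normL2 h N v"
proof -
  have "\<bar>\<Sum>(i, j)\<in>grid_cell N. u i j * v i j\<bar>
      \<le> (\<Sum>x\<in>grid_cell N. \<bar>case_prod u x\<bar> * \<bar>case_prod v x\<bar>)"
    by (rule order_trans[OF sum_abs]) (simp add: abs_mult split_def)
  then have "\<bar>ip h N u v\<bar> \<le> h\<^sup>2 * (\<Sum>x\<in>grid_cell N. \<bar>case_prod u x\<bar> * \<bar>case_prod v x\<bar>)"
    unfolding ip_eq_sum_grid_cell abs_mult by (simp add: mult_left_mono)
  also have "\<dots> \<le> h\<^sup>2 * (L2_set (case_prod u) (grid_cell N) * L2_set (case_prod v) (grid_cell N))"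
    by (intro mult_left_mono L2_set_mult_ineq) simp
  also have "\<dots> = normL2 h N u * normL2 h N v"
    unfolding normL2_eq_L2_set by (simp add: power2_eq_square)
  finally show ?thesis .
qed

lemma normL2_mono:
  assumes "\<And>i j. \<bar>u i j\<bar> \<le> \<bar>v i j\<bar>"
  shows "normL2 h N u \<le> normL2 h N v"
proof -
  have "L2_set (case_prod w) A = L2_set (\<lambda>x. \<bar>case_prod w x\<bar>) A" for w :: gridfun and A
    unfolding L2_set_def by simp
  moreover have "L2_set (\<lambda>x. \<bar>case_prod u x\<bar>) A \<le> L2_set (\<lambda>x. \<bar>case_prod v x\<bar>) A" for A
    using assms by (intro L2_set_mono) (auto simp: split_def)
  ultimately show ?thesis
    unfolding normL2_eq_L2_set by (metis abs_ge_zero mult_left_mono)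
qed

lemma normL2_abs: "normL2 h N (\<lambda>i j. \<bar>u i j\<bar>) = normL2 h N u"
  unfolding normL2_def ip_def by simp

lemma normL2_add_le: "normL2 h N (\<lambda>i j. u i j + v i j) \<le> normL2 h N u + normL2 h N v"
  unfolding normL2_eq_L2_set distrib_left[symmetric]
  using L2_set_triangle_ineq[of "case_prod u" "case_prod v"]
  by (intro mult_left_mono) (simp_all add: split_def)

lemma normL2_scale: "normL2 h N (\<lambda>i j. c * u i j) = \<bar>c\<bar> * normL2 h N u"
  unfolding normL2_def ip_def
  by (simp add: power2_eq_square real_sqrt_mult sum_distrib_left[symmetric] ac_simps)

lemma normL2_le_of_pointwise:
  assumes "\<And>i j. \<bar>g i j\<bar> \<le> K * (\<bar>a i j\<bar> + \<bar>a' i j\<bar> + \<bar>b i j\<bar> + \<bar>b' i j\<bar> + \<bar>c i j\<bar>)" "0 \<le> K"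
  shows "normL2 h N g
    \<le> K * (normL2 h N a + normL2 h N a' + normL2 h N b + normL2 h N b' + normL2 h N c)"
proof -
  let ?n = "\<lambda>u. normL2 h N (\<lambda>i j. \<bar>u i j\<bar>)"
  have "normL2 h N g \<le> normL2 h N (\<lambda>i j. K * (\<bar>a i j\<bar> + \<bar>a' i j\<bar> + \<bar>b i j\<bar> + \<bar>b' i j\<bar> + \<bar>c i j\<bar>))"
    using assms by (intro normL2_mono) simp
  also have "\<dots> = K * normL2 h N (\<lambda>i j. \<bar>a i j\<bar> + \<bar>a' i j\<bar> + \<bar>b i j\<bar> + \<bar>b' i j\<bar> + \<bar>c i j\<bar>)"
    using assms(2) by (simp add: normL2_scale)
  also have "\<dots> \<le> K * (?n a + ?n a' + ?n b + ?n b' + ?n c)"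
  proof (rule mult_left_mono[OF _ assms(2)])
    show "normL2 h N (\<lambda>i j. \<bar>a i j\<bar> + \<bar>a' i j\<bar> + \<bar>b i j\<bar> + \<bar>b' i j\<bar> + \<bar>c i j\<bar>)
        \<le> ?n a + ?n a' + ?n b + ?n b' + ?n c"
      by (rule order_trans[OF normL2_add_le] order_trans[OF add_right_mono[OF normL2_add_le]]
          add_right_mono normL2_add_le)+
  qed
  finally show ?thesis unfolding normL2_abs .
qed

lemma gradL2_eq: "gradL2 h N u = sqrt ((normL2 h N (Dx h u))\<^sup>2 + (normL2 h N (Dy h u))\<^sup>2)"
  unfolding gradL2_def ip_self_eq_normL2_sq ..

lemma gradL2_nonneg: "0 \<le> gradL2 h N u"
  unfolding gradL2_eq by simp

lemma normL2_Dx_le_gradL2: "normL2 h N (Dx h u) \<le> gradL2 h N u"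
  unfolding gradL2_eq by (rule real_le_rsqrt) simp

lemma normL2_Dy_le_gradL2: "normL2 h N (Dy h u) \<le> gradL2 h N u"
  unfolding gradL2_eq by (rule real_le_rsqrt) simp

lemma normL2_le_normH1: "normL2 h N u \<le> normH1 h N u"
  unfolding normH1_def by (rule real_le_rsqrt) simp

lemma gradL2_le_normH1: "gradL2 h N u \<le> normH1 h N u"
  unfolding normH1_def by (rule real_le_rsqrt) simp

section \<open>Shifts and summation by parts\<close>

lemma sum_shift_cyclic:
  fixes u :: "int \<Rightarrow> real"
  assumes "u (int N + 1) = u 1"
  shows "(\<Sum>i\<in>{1..int N}. u (i + 1)) = (\<Sum>i\<in>{1..int N}. u i)"
proof (cases "N = 0")
  case False
  then have split_last: "{2..int N + 1} = insert (int N + 1) {2..int N}"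
    and split_first: "{1..int N} = insert 1 {2..int N}" by auto
  have "(\<Sum>i\<in>{1..int N}. u (i + 1)) = (\<Sum>i\<in>{2..int N + 1}. u i)"
    by (rule sum.reindex_bij_witness[of _ "\<lambda>i. i - 1" "\<lambda>i. i + 1"]) auto
  also have "\<dots> = (\<Sum>i\<in>{1..int N}. u i)"
    unfolding split_last split_first using assms by (simp add: add.commute)
  finally show ?thesis .
qed simp

lemma normL2_shift_x:
  assumes "grid_periodic N u"
  shows "normL2 h N (\<lambda>i j. u (i + 1) j) = normL2 h N u"
proof -
  have "(\<Sum>i\<in>{1..int N}. \<Sum>j\<in>{1..int N}. u (i + 1) j * u (i + 1) j)
      = (\<Sum>i\<in>{1..int N}. \<Sum>j\<in>{1..int N}. u i j * u i j)"
    by (intro sum_shift_cyclic[where u = "\<lambda>i. \<Sum>j\<in>{1..int N}. u i j * u i j"])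
      (simp add: grid_periodic_wrap[OF assms])
  then show ?thesis unfolding normL2_def ip_def by simp
qed

lemma normL2_transpose: "normL2 h N (\<lambda>i j. u j i) = normL2 h N u"
  unfolding normL2_def ip_transpose[of h N u u, symmetric] ..

lemma normL2_shift_y:
  assumes "grid_periodic N u"
  shows "normL2 h N (\<lambda>i j. u i (j + 1)) = normL2 h N u"
proof -
  have "normL2 h N (\<lambda>i j. u i (j + 1)) = normL2 h N (\<lambda>i j. u j (i + 1))"
    using normL2_transpose[of h N "\<lambda>i j. u j (i + 1)"] by simp
  also have "\<dots> = normL2 h N (\<lambda>i j. u j i)"
    using normL2_shift_x[OF grid_periodic_transpose[OF assms]] .
  also have "\<dots> = normL2 h N u"
    by (rule normL2_transpose)
  finally show ?thesis .
qed

lemma sum_by_parts_cyclic: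
  fixes g f :: "int \<Rightarrow> real"
  assumes "g (int N) = g 0" "f (int N + 1) = f 1"
  shows "(\<Sum>i\<in>{1..int N}. (g i - g (i - 1)) * f i) = - (\<Sum>i\<in>{1..int N}. g i * (f (i + 1) - f i))"
proof -
  have "(\<Sum>i\<in>{1..int N}. g i * f (i + 1)) = (\<Sum>i\<in>{1..int N}. g (i - 1) * f i)"
    using sum_shift_cyclic[of "\<lambda>i. g (i - 1) * f i" N] assms by simp
  then show ?thesis
    by (simp add: algebra_simps sum_subtractf)
qed

lemma ip_dx:
  assumes "grid_periodic N F" "grid_periodic N f"
  shows "ip h N (dx h F) f = - ip h N F (Dx h f)"
proof -
  have by_parts: "(\<Sum>i\<in>{1..int N}. (F i j - F (i - 1) j) / h * f i j)
      = - (\<Sum>i\<in>{1..int N}. F i j * ((f (i + 1) j - f i j) / h))" for j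
  proof -
    have "(\<Sum>i\<in>{1..int N}. (F i j - F (i - 1) j) * f i j)
        = - (\<Sum>i\<in>{1..int N}. F i j * (f (i + 1) j - f i j))"
      by (intro sum_by_parts_cyclic) (simp_all add: grid_periodic_wrap assms)
    then show ?thesis
      by (simp add: sum_divide_distrib[symmetric])
  qed
  have "ip h N (dx h F) f = h\<^sup>2 * (\<Sum>j\<in>{1..int N}. \<Sum>i\<in>{1..int N}. (F i j - F (i - 1) j) / h * f i j)"
    unfolding ip_def dx_def by (subst sum.swap) (rule refl)
  also have "\<dots> = - (h\<^sup>2 * (\<Sum>j\<in>{1..int N}. \<Sum>i\<in>{1..int N}. F i j * ((f (i + 1) j - f i j) / h)))"
    unfolding by_parts by (simp add: sum_negf)
  also have "\<dots> = - ip h N F (Dx h f)"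
    unfolding ip_def Dx_def by (subst sum.swap) (rule refl)
  finally show ?thesis .
qed

lemma ip_dy:
  assumes "grid_periodic N F" "grid_periodic N f"
  shows "ip h N (dy h F) f = - ip h N F (Dy h f)"
proof -
  have "ip h N (dy h F) f = ip h N (dx h (\<lambda>a b. F b a)) (\<lambda>a b. f b a)"
    using ip_transpose[of h N "dx h (\<lambda>a b. F b a)" "\<lambda>a b. f b a"]
    unfolding dx_def dy_def by simp
  also have "\<dots> = - ip h N (\<lambda>a b. F b a) (Dx h (\<lambda>a b. f b a))"
    using ip_dx grid_periodic_transpose assms by blast
  also have "\<dots> = - ip h N F (Dy h f)"
    using ip_transpose[of h N "\<lambda>a b. F b a" "Dx h (\<lambda>a b. f b a)"]
    unfolding Dx_def Dy_def by simp
  finally show ?thesis .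
qed

lemma ip_div_coef_grad:
  assumes "grid_periodic N w" "grid_periodic N v" "grid_periodic N f"
  shows "ip h N (div_coef_grad h w v) f
    = - (ip h N (\<lambda>i j. avgx w i j * Dx h v i j) (Dx h f)
         + ip h N (\<lambda>i j. avgy w i j * Dy h v i j) (Dy h f))"
proof -
  have "grid_periodic N (\<lambda>i j. avgx w i j * Dx h v i j)" "grid_periodic N (\<lambda>i j. avgy w i j * Dy h v i j)"
    using assms by (simp_all add: grid_periodic_pointwise grid_periodic_avgx grid_periodic_avgy
        grid_periodic_Dx grid_periodic_Dy)
  then show ?thesis
    unfolding div_coef_grad_def ip_add_left using assms(3) by (simp add: ip_dx ip_dy)
qed

lemma abs_ip_Dx_Dy_le:
  "\<bar>ip h N u (Dx h f) + ip h N v (Dy h f)\<bar> \<le> (normL2 h N u + normL2 h N v) * gradL2 h N f"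
proof -
  have "\<bar>ip h N u (Dx h f) + ip h N v (Dy h f)\<bar>
      \<le> normL2 h N u * normL2 h N (Dx h f) + normL2 h N v * normL2 h N (Dy h f)"
    by (rule order_trans[OF abs_triangle_ineq add_mono[OF abs_ip_le abs_ip_le]])
  also have "\<dots> \<le> normL2 h N u * gradL2 h N f + normL2 h N v * gradL2 h N f"
    by (intro add_mono mult_left_mono normL2_Dx_le_gradL2 normL2_Dy_le_gradL2 normL2_nonneg)
  finally show ?thesis by (simp add: distrib_right)
qed

section \<open>The chemotaxis flux\<close>

lemma abs_quotient_diff_le:
  fixes a b \<phi> \<psi> m M :: real
  assumes "0 < m" "m \<le> a" "m \<le> b" "\<bar>\<psi>\<bar> \<le> M"
  shows "\<bar>\<phi> / a - \<psi> / b\<bar> \<le> \<bar>\<phi> - \<psi>\<bar> / m + M * \<bar>a - b\<bar> / m\<^sup>2"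
proof -
  have "\<phi> / a - \<psi> / b = (\<phi> - \<psi>) / a + \<psi> * (b - a) / (a * b)"
    using assms by (simp add: field_simps)
  moreover have "\<bar>(\<phi> - \<psi>) / a\<bar> \<le> \<bar>\<phi> - \<psi>\<bar> / m"
    using assms by (simp add: abs_div frac_le)
  moreover have "\<bar>\<psi> * (b - a) / (a * b)\<bar> \<le> M * \<bar>a - b\<bar> / m\<^sup>2"
  proof -
    have "m\<^sup>2 \<le> a * b"
      unfolding power2_eq_square using assms by (intro mult_mono) auto
    moreover have "\<bar>\<psi>\<bar> * \<bar>b - a\<bar> \<le> M * \<bar>a - b\<bar>"
      using assms by (simp add: abs_minus_commute mult_right_mono)
    ultimately show ?thesis
      using assms by (simp add: abs_div abs_mult frac_le)
  qed
  ultimately show ?thesis by linarith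
qed

lemma abs_avg_mult_diff_le:
  fixes x1 x2 y1 y2 Q E G c :: real
  assumes "\<bar>Q\<bar> \<le> G" "\<bar>x1\<bar> \<le> c" "\<bar>x2\<bar> \<le> c"
  shows "\<bar>(x1 + x2) / 2 * (Q + E) - (y1 + y2) / 2 * Q\<bar> \<le> G / 2 * (\<bar>x1 - y1\<bar> + \<bar>x2 - y2\<bar>) + c * \<bar>E\<bar>"
proof -
  have regroup: "(x1 + x2) / 2 * (Q + E) - (y1 + y2) / 2 * Q = ((x1 - y1) + (x2 - y2)) / 2 * Q + (x1 + x2) / 2 * E"
    by (simp add: field_simps)
  have "\<bar>((x1 - y1) + (x2 - y2)) / 2 * Q\<bar> \<le> G / 2 * (\<bar>x1 - y1\<bar> + \<bar>x2 - y2\<bar>)"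
    using assms(1) abs_triangle_ineq[of "x1 - y1" "x2 - y2"]
    by (simp add: abs_mult mult.commute mult_mono)
  moreover have "\<bar>(x1 + x2) / 2\<bar> \<le> c"
    using assms(2,3) by (simp add: abs_le_iff)
  then have "\<bar>(x1 + x2) / 2 * E\<bar> \<le> c * \<bar>E\<bar>"
    unfolding abs_mult by (rule mult_right_mono) simp
  ultimately show ?thesis
    unfolding regroup using abs_triangle_ineq[of "((x1 - y1) + (x2 - y2)) / 2 * Q" "(x1 + x2) / 2 * E"]
    by linarith
qed

definition flux_lip :: "real \<Rightarrow> real \<Rightarrow> real \<Rightarrow> real" where
  "flux_lip m M G = G / m + G * M / m\<^sup>2 + M / m"

lemma flux_lip_nonneg: "0 < m \<Longrightarrow> 0 \<le> M \<Longrightarrow> 0 \<le> G \<Longrightarrow> 0 \<le> flux_lip m M G"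
  unfolding flux_lip_def by simp

text \<open>The flux through one face: \<open>a1, a2\<close> and \<open>b1, b2\<close> are the values of \<open>p + p0\<close> at the two
  end nodes for the two solutions, \<open>\<phi>k\<close> and \<open>\<psi>k\<close> the corresponding values of \<open>\<phi>\<close>.\<close>

lemma face_flux_diff_le:
  fixes \<phi>1 \<phi>2 \<psi>1 \<psi>2 a1 a2 b1 b2 h m M G :: real
  assumes "0 < m" "m \<le> a1" "m \<le> a2" "m \<le> b1" "m \<le> b2"
    and "\<bar>\<phi>1\<bar> \<le> M" "\<bar>\<phi>2\<bar> \<le> M" "\<bar>\<psi>1\<bar> \<le> M" "\<bar>\<psi>2\<bar> \<le> M"
    and "\<bar>(b2 - b1) / h\<bar> \<le> G"
  shows "\<bar>(\<phi>1 / a1 + \<phi>2 / a2) / 2 * ((a2 - a1) / h) - (\<psi>1 / b1 + \<psi>2 / b2) / 2 * ((b2 - b1) / h)\<bar>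
    \<le> flux_lip m M G
        * (\<bar>\<phi>1 - \<psi>1\<bar> + \<bar>\<phi>2 - \<psi>2\<bar> + \<bar>a1 - b1\<bar> + \<bar>a2 - b2\<bar> + \<bar>(a2 - b2 - (a1 - b1)) / h\<bar>)"
proof -
  define E where "E = (a2 - b2 - (a1 - b1)) / h"
  define S where "S = \<bar>\<phi>1 - \<psi>1\<bar> + \<bar>\<phi>2 - \<psi>2\<bar>"
  define T where "T = \<bar>a1 - b1\<bar> + \<bar>a2 - b2\<bar>"
  have G: "0 \<le> G" and M: "0 \<le> M" using assms(6,10) by linarith+
  have split_difference: "(a2 - a1) / h = (b2 - b1) / h + E"
    unfolding E_def by (simp add: add_divide_distrib[symmetric])
  have "\<bar>\<phi>1 / a1\<bar> \<le> M / m" "\<bar>\<phi>2 / a2\<bar> \<le> M / m"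
    using assms M by (simp_all add: abs_div frac_le)
  then have "\<bar>(\<phi>1 / a1 + \<phi>2 / a2) / 2 * ((a2 - a1) / h) - (\<psi>1 / b1 + \<psi>2 / b2) / 2 * ((b2 - b1) / h)\<bar>
      \<le> G / 2 * (\<bar>\<phi>1 / a1 - \<psi>1 / b1\<bar> + \<bar>\<phi>2 / a2 - \<psi>2 / b2\<bar>) + M / m * \<bar>E\<bar>"
    unfolding split_difference by (rule abs_avg_mult_diff_le[OF assms(10)])
  also have "\<dots> \<le> G / 2 * (S / m + M * T / m\<^sup>2) + M / m * \<bar>E\<bar>"
  proof -
    have "\<bar>\<phi>1 / a1 - \<psi>1 / b1\<bar> + \<bar>\<phi>2 / a2 - \<psi>2 / b2\<bar>
        \<le> (\<bar>\<phi>1 - \<psi>1\<bar> / m + M * \<bar>a1 - b1\<bar> / m\<^sup>2) + (\<bar>\<phi>2 - \<psi>2\<bar> / m + M * \<bar>a2 - b2\<bar> / m\<^sup>2)"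
      using assms by (intro add_mono abs_quotient_diff_le) auto
    also have "\<dots> = S / m + M * T / m\<^sup>2"
      unfolding S_def T_def by (simp add: add_divide_distrib distrib_left)
    finally show ?thesis using G by (simp add: mult_left_mono)
  qed
  also have "\<dots> = G / m * (S / 2) + G * M / m\<^sup>2 * (T / 2) + M / m * \<bar>E\<bar>"
    by (simp add: algebra_simps)
  also have "\<dots> \<le> G / m * (S + T + \<bar>E\<bar>) + G * M / m\<^sup>2 * (S + T + \<bar>E\<bar>) + M / m * (S + T + \<bar>E\<bar>)"
    unfolding S_def T_def using G M assms(1) by (intro add_mono mult_left_mono) simp_all
  finally show ?thesis
    unfolding flux_lip_def E_def S_def T_def by (simp add: distrib_right add.assoc)
qed

definition chemo_flux_x :: "real \<Rightarrow> gridfun \<Rightarrow> gridfun \<Rightarrow> gridfun \<Rightarrow> gridfun" where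
  "chemo_flux_x h \<phi> p p0 =
     (\<lambda>i j. avgx (\<lambda>a b. \<phi> a b / (p a b + p0 a b)) i j * Dx h (\<lambda>a b. p a b + p0 a b) i j)"

definition chemo_flux_y :: "real \<Rightarrow> gridfun \<Rightarrow> gridfun \<Rightarrow> gridfun \<Rightarrow> gridfun" where
  "chemo_flux_y h \<phi> p p0 =
     (\<lambda>i j. avgy (\<lambda>a b. \<phi> a b / (p a b + p0 a b)) i j * Dy h (\<lambda>a b. p a b + p0 a b) i j)"

lemma ip_chemo_flux_div:
  assumes "grid_periodic N \<phi>" "grid_periodic N p" "grid_periodic N p0" "grid_periodic N f"
  shows "ip h N (chemo_flux_div h \<phi> p p0) f
    = - (ip h N (chemo_flux_x h \<phi> p p0) (Dx h f) + ip h N (chemo_flux_y h \<phi> p p0) (Dy h f))"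
proof -
  have periodic_sum: "grid_periodic N (\<lambda>a b. p a b + p0 a b)"
    using assms by (simp add: grid_periodic_pointwise)
  then have "grid_periodic N (\<lambda>a b. \<phi> a b / (p a b + p0 a b))"
    using assms(1) by (rule grid_periodic_pointwise)
  then show ?thesis
    unfolding chemo_flux_div_def chemo_flux_x_def chemo_flux_y_def
    by (rule ip_div_coef_grad[OF _ periodic_sum assms(4)])
qed

lemma normL2_chemo_flux_x_diff_le:
  assumes periodic: "grid_periodic N \<phi>1" "grid_periodic N p1" "grid_periodic N \<phi>2" "grid_periodic N p2"
    and "0 < m" "\<And>i j. m \<le> p1 i j + p0 i j" "\<And>i j. m \<le> p2 i j + p0 i j"
    and "\<And>i j. \<bar>\<phi>1 i j\<bar> \<le> M" "\<And>i j. \<bar>\<phi>2 i j\<bar> \<le> M"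
    and G: "\<And>i j. \<bar>Dx h (\<lambda>a b. p2 a b + p0 a b) i j\<bar> \<le> G"
  shows "normL2 h N (\<lambda>i j. chemo_flux_x h \<phi>1 p1 p0 i j - chemo_flux_x h \<phi>2 p2 p0 i j)
    \<le> flux_lip m M G * (2 * normL2 h N (\<lambda>i j. \<phi>1 i j - \<phi>2 i j) + 2 * normL2 h N (\<lambda>i j. p1 i j - p2 i j)
        + normL2 h N (Dx h (\<lambda>i j. p1 i j - p2 i j)))"
proof -
  define e\<phi> where "e\<phi> = (\<lambda>i j. \<phi>1 i j - \<phi>2 i j)"
  define ep where "ep = (\<lambda>i j. p1 i j - p2 i j)"
  have K: "0 \<le> flux_lip m M G"
    using assms(5) assms(8)[of 0 0] G[of 0 0] by (intro flux_lip_nonneg) auto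
  have "\<bar>chemo_flux_x h \<phi>1 p1 p0 i j - chemo_flux_x h \<phi>2 p2 p0 i j\<bar>
      \<le> flux_lip m M G * (\<bar>e\<phi> i j\<bar> + \<bar>e\<phi> (i + 1) j\<bar> + \<bar>ep i j\<bar> + \<bar>ep (i + 1) j\<bar> + \<bar>Dx h ep i j\<bar>)" for i j
    using face_flux_diff_le[of m "p1 i j + p0 i j" "p1 (i + 1) j + p0 (i + 1) j" "p2 i j + p0 i j"
        "p2 (i + 1) j + p0 (i + 1) j" "\<phi>1 i j" M "\<phi>1 (i + 1) j" "\<phi>2 i j" "\<phi>2 (i + 1) j" h G] assms
    unfolding chemo_flux_x_def avgx_def Dx_def e\<phi>_def ep_def by simp
  then have "normL2 h N (\<lambda>i j. chemo_flux_x h \<phi>1 p1 p0 i j - chemo_flux_x h \<phi>2 p2 p0 i j)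
      \<le> flux_lip m M G * (normL2 h N e\<phi> + normL2 h N (\<lambda>i j. e\<phi> (i + 1) j) + normL2 h N ep
        + normL2 h N (\<lambda>i j. ep (i + 1) j) + normL2 h N (Dx h ep))"
    using K by (rule normL2_le_of_pointwise)
  moreover have "grid_periodic N e\<phi>" "grid_periodic N ep"
    unfolding e\<phi>_def ep_def using periodic by (simp_all add: grid_periodic_pointwise)
  ultimately show ?thesis
    unfolding e\<phi>_def[symmetric] ep_def[symmetric] by (simp add: normL2_shift_x algebra_simps)
qed


lemma normL2_chemo_flux_y_diff_le:
  assumes periodic: "grid_periodic N \<phi>1" "grid_periodic N p1" "grid_periodic N \<phi>2" "grid_periodic N p2"
    and "0 < m" "\<And>i j. m \<le> p1 i j + p0 i j" "\<And>i j. m \<le> p2 i j + p0 i j"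
    and "\<And>i j. \<bar>\<phi>1 i j\<bar> \<le> M" "\<And>i j. \<bar>\<phi>2 i j\<bar> \<le> M"
    and G: "\<And>i j. \<bar>Dy h (\<lambda>a b. p2 a b + p0 a b) i j\<bar> \<le> G"
  shows "normL2 h N (\<lambda>i j. chemo_flux_y h \<phi>1 p1 p0 i j - chemo_flux_y h \<phi>2 p2 p0 i j)
    \<le> flux_lip m M G * (2 * normL2 h N (\<lambda>i j. \<phi>1 i j - \<phi>2 i j) + 2 * normL2 h N (\<lambda>i j. p1 i j - p2 i j)
        + normL2 h N (Dy h (\<lambda>i j. p1 i j - p2 i j)))"
proof -
  define e\<phi> where "e\<phi> = (\<lambda>i j. \<phi>1 i j - \<phi>2 i j)"
  define ep where "ep = (\<lambda>i j. p1 i j - p2 i j)"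
  have K: "0 \<le> flux_lip m M G"
    using assms(5) assms(8)[of 0 0] G[of 0 0] by (intro flux_lip_nonneg) auto
  have "\<bar>chemo_flux_y h \<phi>1 p1 p0 i j - chemo_flux_y h \<phi>2 p2 p0 i j\<bar>
      \<le> flux_lip m M G * (\<bar>e\<phi> i j\<bar> + \<bar>e\<phi> i (j + 1)\<bar> + \<bar>ep i j\<bar> + \<bar>ep i (j + 1)\<bar> + \<bar>Dy h ep i j\<bar>)" for i j
    using face_flux_diff_le[of m "p1 i j + p0 i j" "p1 i (j + 1) + p0 i (j + 1)" "p2 i j + p0 i j"
        "p2 i (j + 1) + p0 i (j + 1)" "\<phi>1 i j" M "\<phi>1 i (j + 1)" "\<phi>2 i j" "\<phi>2 i (j + 1)" h G] assms
    unfolding chemo_flux_y_def avgy_def Dy_def e\<phi>_def ep_def by simp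
  then have "normL2 h N (\<lambda>i j. chemo_flux_y h \<phi>1 p1 p0 i j - chemo_flux_y h \<phi>2 p2 p0 i j)
      \<le> flux_lip m M G * (normL2 h N e\<phi> + normL2 h N (\<lambda>i j. e\<phi> i (j + 1)) + normL2 h N ep
        + normL2 h N (\<lambda>i j. ep i (j + 1)) + normL2 h N (Dy h ep))"
    using K by (rule normL2_le_of_pointwise)
  moreover have "grid_periodic N e\<phi>" "grid_periodic N ep"
    unfolding e\<phi>_def ep_def using periodic by (simp_all add: grid_periodic_pointwise)
  ultimately show ?thesis
    unfolding e\<phi>_def[symmetric] ep_def[symmetric] by (simp add: normL2_shift_y algebra_simps)
qed


lemma abs_ip_chemo_flux_div_diff_le:
  fixes m M G :: real and \<phi>1 p1 \<phi>2 p2 p0 f :: gridfun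
  assumes periodic: "grid_periodic N \<phi>1" "grid_periodic N p1" "grid_periodic N \<phi>2"
      "grid_periodic N p2" "grid_periodic N p0" "grid_periodic N f"
    and m: "0 < m" "\<And>i j. m \<le> p1 i j + p0 i j" "\<And>i j. m \<le> p2 i j + p0 i j"
    and M: "\<And>i j. \<bar>\<phi>1 i j\<bar> \<le> M" "\<And>i j. \<bar>\<phi>2 i j\<bar> \<le> M"
    and G: "\<And>i j. \<bar>Dx h (\<lambda>a b. p2 a b + p0 a b) i j\<bar> \<le> G"
      "\<And>i j. \<bar>Dy h (\<lambda>a b. p2 a b + p0 a b) i j\<bar> \<le> G"
  shows "\<bar>ip h N (\<lambda>i j. chemo_flux_div h \<phi>1 p1 p0 i j - chemo_flux_div h \<phi>2 p2 p0 i j) f\<bar>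
    \<le> 6 * flux_lip m M G
        * (normL2 h N (\<lambda>i j. \<phi>1 i j - \<phi>2 i j) + normH1 h N (\<lambda>i j. p1 i j - p2 i j))
        * gradL2 h N f"
proof -
  define K where "K = flux_lip m M G"
  define e\<phi> where "e\<phi> = (\<lambda>i j. \<phi>1 i j - \<phi>2 i j)"
  define ep where "ep = (\<lambda>i j. p1 i j - p2 i j)"
  define Fx where "Fx = (\<lambda>i j. chemo_flux_x h \<phi>1 p1 p0 i j - chemo_flux_x h \<phi>2 p2 p0 i j)"
  define Fy where "Fy = (\<lambda>i j. chemo_flux_y h \<phi>1 p1 p0 i j - chemo_flux_y h \<phi>2 p2 p0 i j)"
  have K: "0 \<le> K"
    unfolding K_def using m(1) M(1)[of 0 0] G(1)[of 0 0] by (intro flux_lip_nonneg) auto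
  have Fx_norm: "normL2 h N Fx \<le> K * (2 * normL2 h N e\<phi> + 2 * normL2 h N ep + normL2 h N (Dx h ep))"
    unfolding Fx_def K_def e\<phi>_def ep_def by (rule normL2_chemo_flux_x_diff_le[OF periodic(1-4) m M G(1)])
  have Fy_norm: "normL2 h N Fy \<le> K * (2 * normL2 h N e\<phi> + 2 * normL2 h N ep + normL2 h N (Dy h ep))"
    unfolding Fy_def K_def e\<phi>_def ep_def by (rule normL2_chemo_flux_y_diff_le[OF periodic(1-4) m M G(2)])
  have "normL2 h N ep \<le> normH1 h N ep" "normL2 h N (Dx h ep) \<le> normH1 h N ep"
    "normL2 h N (Dy h ep) \<le> normH1 h N ep"
    using normL2_le_normH1 normL2_Dx_le_gradL2 normL2_Dy_le_gradL2 gradL2_le_normH1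
    by (blast intro: order_trans)+
  then have "(2 * normL2 h N e\<phi> + 2 * normL2 h N ep + normL2 h N (Dx h ep))
      + (2 * normL2 h N e\<phi> + 2 * normL2 h N ep + normL2 h N (Dy h ep))
      \<le> 6 * (normL2 h N e\<phi> + normH1 h N ep)"
    using normL2_nonneg[of h N e\<phi>] by (simp add: algebra_simps)
  from mult_left_mono[OF this K] Fx_norm Fy_norm
  have flux_norms: "normL2 h N Fx + normL2 h N Fy \<le> 6 * K * (normL2 h N e\<phi> + normH1 h N ep)"
    by (simp add: algebra_simps)
  have "ip h N (\<lambda>i j. chemo_flux_div h \<phi>1 p1 p0 i j - chemo_flux_div h \<phi>2 p2 p0 i j) f
      = - (ip h N Fx (Dx h f) + ip h N Fy (Dy h f))"
    unfolding ip_diff_left Fx_def Fy_def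
    using ip_chemo_flux_div[OF periodic(1,2,5,6)] ip_chemo_flux_div[OF periodic(3,4,5,6)] by simp
  then have "\<bar>ip h N (\<lambda>i j. chemo_flux_div h \<phi>1 p1 p0 i j - chemo_flux_div h \<phi>2 p2 p0 i j) f\<bar>
      \<le> (normL2 h N Fx + normL2 h N Fy) * gradL2 h N f"
    using abs_ip_Dx_Dy_le by (simp only: abs_minus_cancel)
  also have "\<dots> \<le> 6 * K * (normL2 h N e\<phi> + normH1 h N ep) * gradL2 h N f"
    by (rule mult_right_mono[OF flux_norms gradL2_nonneg])
  finally show ?thesis unfolding K_def e\<phi>_def ep_def .
qed


lemma abs_ip_chemo_flux_div_error_le:
  fixes phie pe p0 phim pm f :: gridfun
  assumes "0 < N" "0 < mp"
    and periodic: "grid_periodic N phie" "grid_periodic N pe" "grid_periodic N p0"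
      "grid_periodic N phim" "grid_periodic N pm" "grid_periodic N f"
    and nonneg: "\<And>i j. 0 \<le> pe i j" "\<And>i j. 0 \<le> pm i j" "\<And>i j. mp \<le> p0 i j"
    and exact_bound: "normLinf N phie + normLinf N pe \<le> B"
    and approx_bound: "normLinf N phim + normLinf N pm + gradLinf h N pm \<le> B + 1"
    and "gradLinf h N p0 \<le> Ct"
  shows "\<bar>ip h N (\<lambda>i j. chemo_flux_div h phie pe p0 i j - chemo_flux_div h phim pm p0 i j) f\<bar>
    \<le> 6 * flux_lip mp (\<bar>B\<bar> + 1) (\<bar>B\<bar> + 1 + Ct)
        * (normL2 h N (\<lambda>i j. phie i j - phim i j) + normH1 h N (\<lambda>i j. pe i j - pm i j))
        * gradL2 h N f"
proof -
  have Linf_nonneg: "0 \<le> normLinf N pe" "0 \<le> normLinf N pm" "0 \<le> normLinf N phim" "0 \<le> gradLinf h N pm"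
    using normLinf_nonneg gradLinf_nonneg \<open>0 < N\<close> by blast+
  have "\<bar>phie i j\<bar> \<le> \<bar>B\<bar> + 1" "\<bar>phim i j\<bar> \<le> \<bar>B\<bar> + 1" for i j
    using abs_le_normLinf[OF periodic(1) \<open>0 < N\<close>, of i j] abs_le_normLinf[OF periodic(4) \<open>0 < N\<close>, of i j]
      Linf_nonneg exact_bound approx_bound by linarith+
  moreover have "\<bar>Dx h (\<lambda>a b. pm a b + p0 a b) i j\<bar> \<le> \<bar>B\<bar> + 1 + Ct"
    "\<bar>Dy h (\<lambda>a b. pm a b + p0 a b) i j\<bar> \<le> \<bar>B\<bar> + 1 + Ct" for i j
    unfolding Dx_add Dy_add
    using abs_Dx_le_gradLinf[OF periodic(5) \<open>0 < N\<close>, of h i j] abs_Dx_le_gradLinf[OF periodic(3) \<open>0 < N\<close>, of h i j]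
      abs_Dy_le_gradLinf[OF periodic(5) \<open>0 < N\<close>, of h i j] abs_Dy_le_gradLinf[OF periodic(3) \<open>0 < N\<close>, of h i j]
      Linf_nonneg approx_bound \<open>gradLinf h N p0 \<le> Ct\<close> by (smt (verit))+
  moreover have "mp \<le> pe i j + p0 i j" "mp \<le> pm i j + p0 i j" for i j
    using nonneg[of i j] by linarith+
  ultimately show ?thesis
    using abs_ip_chemo_flux_div_diff_le[OF periodic(1,2,4,5,3,6) \<open>0 < mp\<close>] by blast
qed

theorem lemma3p4:
  fixes B mp Ct :: real
  assumes "0 < mp" and "0 < Ct"
  shows "\<exists>C>0. \<forall>(L::real) (N::nat) (Phi::real\<times>real\<Rightarrow>real) (P::real\<times>real\<Rightarrow>real)
            (P0::real\<times>real\<Rightarrow>real) (Mp::real) (phim::gridfun) (pm::gridfun) (f::gridfun).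
     let h = L / real N;
         phie = restrict h Phi; pe = restrict h P; p0 = restrict h P0
     in (0 < L \<and> 0 < N
         \<and> fun_periodic L Phi \<and> fun_periodic L P \<and> fun_periodic L P0
         \<and> (\<forall>z. Phi differentiable (at z) \<and> P differentiable (at z) \<and> P0 differentiable (at z))
         \<and> (\<forall>z. 0 \<le> Phi z \<and> 0 \<le> P z \<and> mp \<le> P0 z \<and> P0 z \<le> Mp)
         \<and> gradLinf h N p0 \<le> Ct
         \<and> normLinf N phie + normLinf N pe + cgradLinf h N P \<le> B
         \<and> grid_periodic N phim \<and> grid_periodic N pm \<and> grid_periodic N f
         \<and> (\<forall>i j. 0 \<le> phim i j \<and> 0 \<le> pm i j)
         \<and> normLinf N phim + normLinf N pm + gradLinf h N pm \<le> B + 1)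
        \<longrightarrow> \<bar>ip h N (\<lambda>i j. chemo_flux_div h phie pe p0 i j - chemo_flux_div h phim pm p0 i j) f\<bar>
            \<le> C * (normL2 h N (\<lambda>i j. phie i j - phim i j) + normH1 h N (\<lambda>i j. pe i j - pm i j))
                * gradL2 h N f"
  unfolding Let_def
proof (intro exI[of _ "6 * flux_lip mp (\<bar>B\<bar> + 1) (\<bar>B\<bar> + 1 + Ct)"] conjI allI impI, goal_cases)
  case 1
  show ?case unfolding flux_lip_def using assms by (simp add: add_nonneg_pos)
next
  case (2 L N Phi P P0 Mp phim pm f)
  let ?h = "L / real N"
  have "normLinf N (restrict ?h Phi) + normLinf N (restrict ?h P) \<le> B"
    using 2 cgradLinf_nonneg[of N ?h P] by linarith
  moreover have "grid_periodic N (restrict ?h Phi)" "grid_periodic N (restrict ?h P)"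
    "grid_periodic N (restrict ?h P0)"
    using 2 by (simp_all add: grid_periodic_restrict)
  moreover have "0 \<le> restrict ?h P i j" "mp \<le> restrict ?h P0 i j" for i j
    using 2 by (simp_all add: restrict_def)
  ultimately show ?case
    using 2 assms by (intro abs_ip_chemo_flux_div_error_le) auto
qed

end
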